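(* For every integer $n>2$ there exists a unique $\zeta>1$ such that the system $$P_n'(1-\varepsilon_{j+1})-P_n'(1-\varepsilon_j)=\varepsilon_{j+1}P_n'(1-\varepsilon_{j+1})+P_n(1-\varepsilon_{j+1})-\frac{j}{\zeta},\qquad j=1,\dots,n-1,$$ has a solution $(\varepsilon_j)_{j=1}^n$ with $0=\varepsilon_n<\varepsilon_{n-1}<\dots<\varepsilon_2<\varepsilon_1=1$.
   Context: $P_n(t)=\sum_{i=1}^nt^i$ and $P_n'(t)=\sum_{i=1}^n i\,t^{i-1}$. *)

theory Defs
  imports Complex_Main
begin

definition P :: "nat \<Rightarrow> real \<Rightarrow> real" where
  "P n t = (\<Sum>i=1..n. t ^ i)"

definition P' :: "nat \<Rightarrow> real \<Rightarrow> real" where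
  "P' n t = (\<Sum>i=1..n. real i * t ^ (i - 1))"

end

(*
  Put x_j = 1 - eps_j and s = 1/zeta. With G(x) = x P'(x) - P(x), which is strictly increasing
  on [0, oo), the j-th equation reads G(x_(j+1)) = P'(x_j) - j s.

  Uniqueness: raising s lowers every x_j (for j >= 2), so at most one s lets the sequence
  started at x_1 = 0 end at x_n = 1.

  Existence is by shooting. Run the recursion from x_1 = 0 with G inverted on [0,1] and its
  argument clipped to the range of G there, and let s be the largest parameter in [0,1] for
  which x_n = 1. At that s no clipping occurs and the sequence increases: a first step with
  x_(j+1) <= x_j means H(x_j) <= j s for H = P' - G, and since H is increasing on [0,1] all
  later steps would be non-increasing as well. s < 1 since at s = 1 the sequence stays at 0.

  Finally s > 0, because for s = 0 no admissible sequence exists: on [0,1] one has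
  sqrt(2 G) + 1 <= sqrt(2 P'), so sqrt(2 P'(x_j)) grows by at least 1 per step and would
  exceed sqrt(2 P'(1)) = sqrt(n (n + 1)). That inequality follows from
  F = (2 H - 1)^2 - 8 G >= 1, which holds because F(0) = F(1) = 1 and F is unimodal on [0,1].
*)

theory Submission
  imports Defs "HOL-Analysis.Elementary_Metric_Spaces"
begin

definition P'' :: "nat \<Rightarrow> real \<Rightarrow> real" where
  "P'' n x = (\<Sum>i=1..n. real i * real (i - 1) * x ^ (i - 2))"

definition G :: "nat \<Rightarrow> real \<Rightarrow> real" where
  "G n x = x * P' n x - P n x"

definition H :: "nat \<Rightarrow> real \<Rightarrow> real" where
  "H n x = P' n x - G n x"

lemma has_real_derivative_P: "(P n has_real_derivative P' n x) (at x)"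
  unfolding P_def[abs_def] P'_def by (rule derivative_eq_intros refl | simp)+

lemma has_real_derivative_P': "(P' n has_real_derivative P'' n x) (at x)"
proof -
  have "((\<lambda>x. \<Sum>i=1..n. real i * x ^ (i - 1)) has_real_derivative
        (\<Sum>i=1..n. real i * (real (i - 1) * x ^ (i - 1 - 1)))) (at x)"
    apply (intro DERIV_sum DERIV_cmult)
    subgoal for i using DERIV_pow[of "i - 1" x UNIV] by simp
    done
  then show ?thesis
    unfolding P'_def[abs_def] P''_def by (simp add: mult.assoc numeral_2_eq_2)
qed

lemma has_real_derivative_G: "(G n has_real_derivative x * P'' n x) (at x)"
  unfolding G_def[abs_def]
  by (rule derivative_eq_intros has_real_derivative_P has_real_derivative_P' refl | simp)+

lemma has_real_derivative_H: "(H n has_real_derivative (1 - x) * P'' n x) (at x)"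
  unfolding H_def[abs_def]
  by (rule derivative_eq_intros has_real_derivative_G has_real_derivative_P' refl
      | simp add: algebra_simps)+

lemma continuous_on_P': "continuous_on S (P' n)"
  using has_real_derivative_P' by (meson DERIV_continuous continuous_at_imp_continuous_on)

lemma continuous_on_G: "continuous_on S (G n)"
  using has_real_derivative_G by (meson DERIV_continuous continuous_at_imp_continuous_on)

lemma P''_nonneg: "0 \<le> x \<Longrightarrow> 0 \<le> P'' n x"
  unfolding P''_def by (intro sum_nonneg) auto

lemma P''_pos:
  assumes "2 \<le> n" "0 \<le> x"
  shows "0 < P'' n x"
proof -
  have "P'' n x = 2 + (\<Sum>i\<in>{1..n}-{2}. real i * real (i - 1) * x ^ (i - 2))"
    unfolding P''_def using assms by (subst sum.remove[of _ 2]) auto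
  moreover have "0 \<le> (\<Sum>i\<in>{1..n}-{2}. real i * real (i - 1) * x ^ (i - 2))"
    using assms by (intro sum_nonneg) auto
  ultimately show ?thesis by simp
qed

lemma strict_mono_on_P': "2 \<le> n \<Longrightarrow> strict_mono_on {0..} (P' n)"
  by (rule strict_mono_onI, rule DERIV_pos_imp_increasing)
    (auto intro!: has_real_derivative_P' P''_pos)

lemma strict_mono_on_G:
  assumes "2 \<le> n"
  shows "strict_mono_on {0..} (G n)"
proof (rule strict_mono_onI)
  fix a b :: real
  assume "a \<in> {0..}" "a < b"
  then show "G n a < G n b"
    using assms
    by (intro DERIV_pos_imp_increasing_open[OF \<open>a < b\<close> _ continuous_on_G])
      (auto intro!: has_real_derivative_G mult_pos_pos P''_pos)
qed

lemma mono_on_H: "mono_on {0..1} (H n)"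
  by (rule mono_onI, rule deriv_nonneg_imp_mono[OF has_real_derivative_H])
    (auto intro!: mult_nonneg_nonneg P''_nonneg)

lemma G_0 [simp]: "G n 0 = 0"
  unfolding G_def P_def by (auto intro: sum.neutral)

lemma G_nonneg:
  assumes "0 \<le> x"
  shows "0 \<le> G n x"
proof -
  have "G n 0 \<le> G n x"
    by (rule deriv_nonneg_imp_mono[OF has_real_derivative_G])
      (use assms in \<open>auto intro!: mult_nonneg_nonneg P''_nonneg\<close>)
  then show ?thesis by simp
qed

lemma P_Suc [simp]: "P (Suc n) x = P n x + x ^ Suc n"
  unfolding P_def by simp

lemma P'_Suc [simp]: "P' (Suc n) x = P' n x + real (Suc n) * x ^ n"
  unfolding P'_def by simp

lemma G_Suc: "G (Suc n) x = G n x + real n * x ^ Suc n"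
  unfolding G_def by (simp add: algebra_simps)

lemma H_Suc: "H (Suc n) x = H n x + real (Suc n) * x ^ n - real n * x ^ Suc n"
  unfolding H_def by (simp add: G_Suc algebra_simps)

lemma P'_0: "1 \<le> n \<Longrightarrow> P' n 0 = 1"
  unfolding P'_def by (simp add: power_0_left sum.atLeast_Suc_atMost)

lemma H_0: "1 \<le> n \<Longrightarrow> H n 0 = 1"
  unfolding H_def by (simp add: P'_0)

lemma P_1: "P n 1 = real n"
  unfolding P_def by simp

lemma P'_1: "P' n 1 = real n * (real n + 1) / 2"
  unfolding P'_def using double_gauss_sum_from_Suc_0[of n, where 'a=real] by simp

lemma G_1: "G n 1 = real n * (real n - 1) / 2"
  unfolding G_def by (simp add: P'_1 P_1 field_simps)

lemma H_1: "H n 1 = real n"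
  unfolding H_def G_def by (simp add: P_1)

lemma G_closed_form: "(1 - x)\<^sup>2 * G n x = x\<^sup>2 - real n * x ^ (n + 1) + (real n - 1) * x ^ (n + 2)"
  by (induction n) (simp_all add: G_def P_def P'_def G_Suc power2_eq_square algebra_simps)

lemma H_closed_form: "(1 - x) * H n x = 1 + x - (real n + 1) * x ^ n + (real n - 1) * x ^ (n + 1)"
  by (induction n) (simp_all add: H_def G_def P_def P'_def H_Suc algebra_simps)

lemma G_half: "G n (1/2) = 1 - (real n + 1) * (1/2) ^ n"
  using G_closed_form[of "1/2" n] by (simp add: power2_eq_square algebra_simps diff_divide_distrib)

lemma H_half: "H n (1/2) = 3 - (real n + 3) * (1/2) ^ n"
  using H_closed_form[of "1/2" n] by (simp add: algebra_simps diff_divide_distrib)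

(* 2 y^n (n + 1 - (n - 1) y) - (1 + y) is positive iff this ratio exceeds 1/2, so its
   sign changes at most once on [0,1]. *)
lemma mono_on_crossing_ratio:
  "mono_on {0..1} (\<lambda>y. y ^ n * (real n + 1 - (real n - 1) * y) / (1 + y))"
proof (rule mono_onI)
  define c where "c y = real n + 1 - (real n - 1) * y" for y
  define r' where "r' y = ((real n * y ^ (n - 1) * c y + (1 - real n) * y ^ n) * (1 + y)
    - y ^ n * c y) / ((1 + y) * (1 + y))" for y
  have deriv: "((\<lambda>y. y ^ n * c y / (1 + y)) has_real_derivative r' y) (at y)" if "0 \<le> y" for y
    unfolding c_def r'_def using that
    by (auto intro!: derivative_eq_intros)
  have "0 \<le> r' y" if "0 \<le> y" "y \<le> 1" for y
  proof (cases n)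
    case 0
    then show ?thesis by (simp add: r'_def c_def)
  next
    case (Suc p)
    have "(real n - 1) * y \<le> real n - 1"
      using that Suc by (intro mult_right_le_one_le) auto
    then have c_ge: "1 \<le> real n - (real n - 1) * y"
      by linarith
    then have "1 * 1 \<le> (real n - (real n - 1) * y) * (1 + y)"
      using that by (intro mult_mono) auto
    then have "real n + 1 \<le> (real n + 1) * (real n - (real n - 1) * y) * (1 + y)"
      by (simp add: mult.assoc mult_le_cancel_left1)
    moreover have "y * c y \<le> 1 * (real n + 1)"
      using that c_ge Suc unfolding c_def by (intro mult_mono) auto
    ultimately have "y * c y \<le> (real n + 1) * (real n - (real n - 1) * y) * (1 + y)"
      by (metis mult_1 order_trans)
    then have "0 \<le> (real n + 1) * (real n - (real n - 1) * y) * (1 + y) - y * c y"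
      by simp
    moreover have "y ^ n = y * y ^ p" "n - 1 = p"
      using Suc by simp_all
    then have "(real n * y ^ (n - 1) * c y + (1 - real n) * y ^ n) * (1 + y) - y ^ n * c y
        = y ^ p * ((real n + 1) * (real n - (real n - 1) * y) * (1 + y) - y * c y)"
      unfolding c_def by (simp add: algebra_simps)
    ultimately show ?thesis
      unfolding r'_def using that by simp
  qed
  then show "a ^ n * (real n + 1 - (real n - 1) * a) / (1 + a)
      \<le> b ^ n * (real n + 1 - (real n - 1) * b) / (1 + b)"
    if "a \<in> {0..1}" "b \<in> {0..1}" "a \<le> b" for a b
    using that unfolding c_def[symmetric] by (intro deriv_nonneg_imp_mono[OF deriv]) auto
qed

lemma has_real_derivative_H_G_gap:
  "((\<lambda>t. (2 * H n t - 1)\<^sup>2 - 8 * G n t) has_real_derivative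
    4 * P'' n t * (1 + t - 2 * t ^ n * (real n + 1 - (real n - 1) * t))) (at t)"
proof -
  have "((\<lambda>t. (2 * H n t - 1)\<^sup>2 - 8 * G n t) has_real_derivative
      2 * (2 * H n t - 1) * (2 * ((1 - t) * P'' n t)) - 8 * (t * P'' n t)) (at t)"
    by (auto intro!: derivative_eq_intros has_real_derivative_H has_real_derivative_G)
  moreover have "2 * (2 * H n t - 1) * (2 * ((1 - t) * P'' n t)) - 8 * (t * P'' n t)
      = 4 * P'' n t * (2 * ((1 - t) * H n t) - 1 - t)"
    by (simp add: algebra_simps)
  moreover have "\<dots> = 4 * P'' n t * (1 + t - 2 * t ^ n * (real n + 1 - (real n - 1) * t))"
    unfolding H_closed_form by (simp add: algebra_simps)
  ultimately show ?thesis
    by simp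
qed

lemma G_le_H_square:
  assumes "1 \<le> n" "0 \<le> y" "y \<le> 1"
  shows "8 * G n y + 1 \<le> (2 * H n y - 1)\<^sup>2"
proof -
  define k where "k t = 2 * t ^ n * (real n + 1 - (real n - 1) * t) - (1 + t)" for t
  define F where "F t = (2 * H n t - 1)\<^sup>2 - 8 * G n t" for t
  have F': "(F has_real_derivative - 4 * P'' n t * k t) (at t)" for t
    using has_real_derivative_H_G_gap[of n t] unfolding F_def k_def by (simp add: algebra_simps)
  have crossing: "0 < k b" if "0 \<le> a" "a \<le> b" "b \<le> 1" "0 < k a" for a b
  proof -
    have iff: "k t > 0 \<longleftrightarrow> 1 < 2 * (t ^ n * (real n + 1 - (real n - 1) * t) / (1 + t))"
      if "0 \<le> t" for t
      using that unfolding k_def by (simp add: field_simps)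
    have "a ^ n * (real n + 1 - (real n - 1) * a) / (1 + a)
        \<le> b ^ n * (real n + 1 - (real n - 1) * b) / (1 + b)"
      using that by (intro mono_onD[OF mono_on_crossing_ratio]) auto
    then show ?thesis
      using that iff[of a] iff[of b] by linarith
  qed
  txt \<open>As \<open>k\<close> changes sign at most once, from negative to positive, \<open>F\<close> first increases
    and then decreases on \<open>[0,1]\<close>; it is therefore bounded below by its endpoint values.\<close>
  have "1 \<le> F y"
  proof (cases "k y \<le> 0")
    case True
    have "F 0 \<le> F y"
    proof (rule deriv_nonneg_imp_mono[OF F'])
      fix t
      assume t: "t \<in> {0..y}"
      then have "k t \<le> 0"
        using True crossing[of t y] assms by force
      then show "0 \<le> - 4 * P'' n t * k t"
        using t by (intro mult_nonpos_nonpos) (auto intro: P''_nonneg)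
    qed (use assms in auto)
    then show ?thesis by (simp add: F_def H_0[OF assms(1)])
  next
    case False
    have "F 1 \<le> F y"
    proof (rule deriv_nonpos_imp_antimono[OF F'])
      fix t
      assume t: "t \<in> {y..1}"
      then have "0 < k t"
        using False crossing[of y t] assms by force
      then show "- 4 * P'' n t * k t \<le> 0"
        using t assms by (intro mult_nonpos_nonneg) (auto intro: P''_nonneg)
    qed (use assms in auto)
    moreover have "F 1 = 1"
      by (simp add: F_def H_1 G_1 power2_eq_square field_simps)
    ultimately show ?thesis by simp
  qed
  then show ?thesis unfolding F_def by simp
qed

lemma sqrt_G_add_one_le_sqrt_P':
  assumes "1 \<le> n" "0 \<le> y" "y \<le> 1"
  shows "sqrt (2 * G n y) + 1 \<le> sqrt (2 * P' n y)"
proof -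
  have "H n 0 \<le> H n y"
    using assms by (intro mono_onD[OF mono_on_H]) auto
  then have H_ge: "1 \<le> H n y"
    using H_0[OF assms(1)] by simp
  have "sqrt (4 * (2 * G n y)) \<le> 2 * H n y - 1"
    using G_le_H_square[OF assms] H_ge by (intro real_le_lsqrt) auto
  then have "2 * sqrt (2 * G n y) \<le> 2 * H n y - 1"
    by (simp only: real_sqrt_mult real_sqrt_four)
  then have "(sqrt (2 * G n y) + 1)\<^sup>2 \<le> 2 * P' n y"
    using G_nonneg[OF assms(2)] unfolding H_def by (simp add: power2_eq_square algebra_simps)
  then show ?thesis
    by (rule real_le_rsqrt)
qed

lemma four_mult_add_three_le_three_mult_two_power: "3 \<le> n \<Longrightarrow> 4 * (n + 3) \<le> 3 * 2 ^ n"
  for n :: nat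
proof (induction n rule: nat_induct_at_least)
  case (Suc n)
  have "(4::nat) \<le> 3 * 2 ^ n"
    using Suc.hyps power_increasing[of 3 n "2::nat"] by simp
  with Suc show ?case by simp
qed simp

definition recursion_path :: "nat \<Rightarrow> real \<Rightarrow> (nat \<Rightarrow> real) \<Rightarrow> bool" where
  "recursion_path n s x \<longleftrightarrow> x 1 = 0 \<and> (\<forall>j\<in>{1..n}. x j \<in> {0..1}) \<and>
     (\<forall>j\<in>{1..<n}. G n (x (Suc j)) = P' n (x j) - real j * s)"

lemma sqrt_P'_ge_of_G_eq_1:
  assumes "3 \<le> n" "0 \<le> y" "y \<le> 1" "G n y = 1"
  shows "5/2 \<le> sqrt (2 * P' n y)"
proof -
  have "1/2 \<le> y"
  proof (rule ccontr)
    assume "\<not> 1/2 \<le> y"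
    then have "G n y < G n (1/2)"
      using assms by (intro strict_mono_onD[OF strict_mono_on_G]) auto
    moreover have "G n (1/2) < 1"
      unfolding G_half by simp
    ultimately show False
      using assms(4) by simp
  qed
  then have "H n (1/2) \<le> H n y"
    using assms by (intro mono_onD[OF mono_on_H]) auto
  moreover have "real (4 * (n + 3)) \<le> real (3 * 2 ^ n)"
    using four_mult_add_three_le_three_mult_two_power[OF assms(1)] by (simp only: of_nat_le_iff)
  then have "(real n + 3) * (1/2) ^ n \<le> 3/4"
    by (simp add: field_simps)
  ultimately have "9/4 \<le> H n y"
    by (simp add: H_half)
  then have "(5/2)\<^sup>2 \<le> 2 * P' n y"
    using assms(4) unfolding H_def by (simp add: power2_eq_square)
  then show ?thesis
    by (rule real_le_rsqrt)
qed

lemma no_recursion_path_at_zero: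
  assumes "3 \<le> n"
  shows "\<not> recursion_path n 0 x"
proof
  assume "recursion_path n 0 x"
  then have x_1: "x 1 = 0"
    and x_mem: "\<And>j. j \<in> {1..n} \<Longrightarrow> 0 \<le> x j \<and> x j \<le> 1"
    and step: "\<And>j. j \<in> {1..<n} \<Longrightarrow> G n (x (Suc j)) = P' n (x j)"
    unfolding recursion_path_def by auto
  have "G n (x 2) = 1"
    using step[of 1] x_1 P'_0 assms by (simp add: numeral_2_eq_2)
  then have "5/2 \<le> sqrt (2 * P' n (x 2))"
    using x_mem[of 2] assms by (intro sqrt_P'_ge_of_G_eq_1) auto
  have growth: "5/2 + real k \<le> sqrt (2 * P' n (x (2 + k)))" if "2 + k \<le> n" for k
    using that
  proof (induction k)
    case (Suc k)
    have "sqrt (2 * G n (x (Suc (2 + k)))) + 1 \<le> sqrt (2 * P' n (x (Suc (2 + k))))"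
      using Suc.prems x_mem[of "Suc (2 + k)"] by (intro sqrt_G_add_one_le_sqrt_P') auto
    then show ?case
      using Suc step[of "2 + k"] by simp
  qed (use \<open>5/2 \<le> sqrt (2 * P' n (x 2))\<close> in simp)
  have "2 + (n - 2) = n"
    using assms by simp
  then have "real n + 1/2 \<le> sqrt (2 * P' n (x n))"
    using growth[of "n - 2"] assms by simp
  also have "\<dots> \<le> sqrt (real n * (real n + 1))"
    using x_mem[of n] assms strict_mono_on_leD[OF strict_mono_on_P', of n "x n" 1]
    by (simp add: P'_1)
  also have "\<dots> < sqrt ((real n + 1/2)\<^sup>2)"
    by (intro real_sqrt_less_mono) (simp add: power2_eq_square algebra_simps)
  finally show False
    by simp
qed

lemma recursion_path_last_less:
  assumes "2 \<le> n" "s < t" "recursion_path n s x" "recursion_path n t y"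
  shows "y n < x n"
proof -
  have x_mem: "\<And>j. j \<in> {1..n} \<Longrightarrow> 0 \<le> x j \<and> x j \<le> 1"
    and y_mem: "\<And>j. j \<in> {1..n} \<Longrightarrow> 0 \<le> y j \<and> y j \<le> 1"
    using assms(3,4) unfolding recursion_path_def by auto
  have step: "y (Suc j) < x (Suc j)" if j: "j \<in> {1..<n}" and le: "y j \<le> x j" for j
  proof -
    have "P' n (y j) \<le> P' n (x j)"
      using strict_mono_on_leD[OF strict_mono_on_P' _ _ le] assms(1) x_mem[of j] y_mem[of j] j
      by auto
    moreover have "real j * s < real j * t"
      using assms(2) j by simp
    ultimately have "P' n (y j) - real j * t < P' n (x j) - real j * s"
      by simp
    then have "G n (y (Suc j)) < G n (x (Suc j))"
      using assms(3,4) j unfolding recursion_path_def by simp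
    then show ?thesis
      using strict_mono_on_less[OF strict_mono_on_G] assms(1) x_mem y_mem j by force
  qed
  have "y j \<le> x j" if "1 \<le> j" "j \<le> n" for j
    using that
  proof (induction j rule: nat_induct_at_least)
    case base
    then show ?case
      using assms(3,4) unfolding recursion_path_def by simp
  next
    case (Suc j)
    then show ?case
      using step[of j] by simp
  qed
  then show ?thesis
    using step[of "n - 1"] assms(1) by simp
qed

lemma recursion_path_unique_parameter:
  assumes "2 \<le> n" "recursion_path n s x" "x n = 1" "recursion_path n t y" "y n = 1"
  shows "s = t"
  using recursion_path_last_less[OF assms(1) _ assms(2,4)]
    recursion_path_last_less[OF assms(1) _ assms(4,2)] assms(3,5)
  by (metis less_irrefl linorder_neqE)

(* Clipping the argument to the range [0, G n 1] of G n on [0,1] makes the orbits below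
   defined, and continuous in s, for every s. *)
definition G_inv :: "nat \<Rightarrow> real \<Rightarrow> real" where
  "G_inv n v = the_inv_into {0..1} (G n) (max 0 (min (G n 1) v))"

fun orbit :: "nat \<Rightarrow> real \<Rightarrow> nat \<Rightarrow> real" where
  "orbit n s 0 = 0"
| "orbit n s (Suc 0) = 0"
| "orbit n s (Suc (Suc j)) = G_inv n (P' n (orbit n s (Suc j)) - real (Suc j) * s)"

lemma orbit_Suc: "1 \<le> j \<Longrightarrow> orbit n s (Suc j) = G_inv n (P' n (orbit n s j) - real j * s)"
  by (cases j) auto

context
  fixes n :: nat
  assumes n_ge_2: "2 \<le> n"
begin

lemma inj_on_G: "inj_on (G n) {0..1}"
  using strict_mono_on_imp_inj_on[OF strict_mono_on_G[OF n_ge_2]] by (rule inj_on_subset) auto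

lemma G_image: "G n ` {0..1} = {0..G n 1}"
proof
  show "G n ` {0..1} \<subseteq> {0..G n 1}"
    using strict_mono_on_leD[OF strict_mono_on_G[OF n_ge_2], of _ 1] G_nonneg by auto
  show "{0..G n 1} \<subseteq> G n ` {0..1}"
  proof
    fix v
    assume "v \<in> {0..G n 1}"
    then obtain x where "0 \<le> x" "x \<le> 1" "G n x = v"
      using IVT'[of "G n" 0 v 1] continuous_on_G by auto
    then show "v \<in> G n ` {0..1}"
      by auto
  qed
qed

lemma G_1_pos: "0 < G n 1"
  using strict_mono_onD[OF strict_mono_on_G[OF n_ge_2], of 0 1] by simp

lemma G_inv_mem: "G_inv n v \<in> {0..1}"
  unfolding G_inv_def using G_image by (intro the_inv_into_into[OF inj_on_G]) auto

lemma G_G_inv: "G n (G_inv n v) = max 0 (min (G n 1) v)"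
  unfolding G_inv_def using G_image by (intro f_the_inv_into_f[OF inj_on_G]) auto

lemma G_inv_G:
  assumes "x \<in> {0..1}"
  shows "G_inv n (G n x) = x"
proof -
  have "G n x \<in> {0..G n 1}"
    using assms G_image by blast
  then have "max 0 (min (G n 1) (G n x)) = G n x"
    by simp
  then show ?thesis
    unfolding G_inv_def using the_inv_into_f_f[OF inj_on_G assms] by simp
qed

lemma G_inv_eq_1_iff: "G_inv n v = 1 \<longleftrightarrow> G n 1 \<le> v"
proof
  assume "G_inv n v = 1"
  then have "max 0 (min (G n 1) v) = G n 1"
    using G_G_inv by metis
  then show "G n 1 \<le> v"
    using G_1_pos by (auto simp: max_def min_def split: if_splits)
next
  assume "G n 1 \<le> v"
  then have "G_inv n v = G_inv n (G n 1)"
    using G_nonneg[of 1 n] by (simp add: G_inv_def)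
  then show "G_inv n v = 1"
    using G_inv_G by simp
qed

lemma G_inv_eq_0: "v \<le> 0 \<Longrightarrow> G_inv n v = 0"
  using G_inv_G[of 0] G_nonneg[of 1 n] by (simp add: G_inv_def)

lemma continuous_on_G_inv: "continuous_on UNIV (G_inv n)"
proof -
  have "continuous_on (G n ` {0..1}) (the_inv_into {0..1} (G n))"
    using the_inv_into_f_f[OF inj_on_G] by (intro continuous_on_inv continuous_on_G) auto
  then have "continuous_on {0..G n 1} (the_inv_into {0..1} (G n))"
    by (simp add: G_image)
  moreover have "continuous_on UNIV (\<lambda>v. max 0 (min (G n 1) v))"
    by (intro continuous_intros)
  moreover have "(\<lambda>v. max 0 (min (G n 1) v)) ` UNIV \<subseteq> {0..G n 1}"
    using G_1_pos by auto
  ultimately show ?thesis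
    unfolding G_inv_def[abs_def] by (rule continuous_on_compose2)
qed

lemma orbit_mem: "orbit n s j \<in> {0..1}"
  using G_inv_mem by (induction n s j rule: orbit.induct) auto

lemma continuous_on_orbit: "continuous_on UNIV (\<lambda>s. orbit n s j)"
proof (induction j)
  case (Suc j)
  show ?case
  proof (cases "j = 0")
    case False
    have "continuous_on UNIV (\<lambda>s. G_inv n (P' n (orbit n s j) - real j * s))"
      by (intro continuous_on_compose2[OF continuous_on_G_inv] continuous_intros
          continuous_on_compose2[OF continuous_on_P' Suc.IH]) auto
    then show ?thesis
      using False by (simp add: orbit_Suc)
  qed simp
qed simp

lemma orbit_Suc_eq_1_iff: "1 \<le> j \<Longrightarrow> orbit n s (Suc j) = 1 \<longleftrightarrow> G n 1 \<le> P' n (orbit n s j) - real j * s"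
  by (simp add: orbit_Suc G_inv_eq_1_iff)

lemma orbit_stays_1:
  assumes "s \<le> 1" "1 \<le> j" "j \<le> k" "k \<le> n" "orbit n s j = 1"
  shows "orbit n s k = 1"
  using assms(3,4)
proof (induction k rule: dec_induct)
  case (step k)
  have "real k * s \<le> real k * 1"
    using assms(1) by (intro mult_left_mono) auto
  then have "G n 1 \<le> P' n 1 - real k * s"
    using H_1[of n] step unfolding H_def by simp
  then show ?case
    using step orbit_Suc_eq_1_iff[of k s] assms(2) by simp
qed (use assms in simp)

lemma orbit_at_1: "orbit n 1 j = 0"
proof (induction j)
  case (Suc j)
  then show ?case
    using P'_0[of n] n_ge_2 by (cases "j = 0") (auto simp: orbit_Suc intro: G_inv_eq_0)
qed simp

lemma G_orbit_Suc:
  "1 \<le> j \<Longrightarrow> G n (orbit n s (Suc j)) = max 0 (min (G n 1) (P' n (orbit n s j) - real j * s))"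
  by (simp add: orbit_Suc G_G_inv)

(* At the largest parameter s for which the orbit ends at 1, the orbit reaches 1 exactly at the
   last step (lemma last_step_exact_at_maximal_parameter below); this rules out all clipping. *)
context
  fixes s :: real
  assumes s_nonneg: "0 \<le> s" and s_le_1: "s \<le> 1"
    and last_step_exact: "P' n (orbit n s (n - 1)) - real (n - 1) * s = G n 1"
begin

lemma orbit_last: "orbit n s n = 1"
proof -
  have "1 \<le> n - 1" "Suc (n - 1) = n"
    using n_ge_2 by simp_all
  then show ?thesis
    using orbit_Suc_eq_1_iff[of "n - 1" s] last_step_exact by simp
qed

lemma orbit_less_1:
  assumes "1 \<le> j" "j < n"
  shows "orbit n s j < 1"
proof (rule ccontr)
  assume "\<not> orbit n s j < 1"
  then have "orbit n s j = 1"
    using orbit_mem[of s j] by simp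
  have "orbit n s (n - 1) = 1"
    by (rule orbit_stays_1[OF s_le_1 assms(1)]) (use assms \<open>orbit n s j = 1\<close> in simp_all)
  then have "P' n 1 - real (n - 1) * s = G n 1"
    using last_step_exact by simp
  moreover have "real (n - 1) * s \<le> real (n - 1)"
    using s_nonneg s_le_1 by (intro mult_right_le_one_le) simp_all
  moreover have "P' n 1 = G n 1 + real n"
    using H_1[of n] unfolding H_def by simp
  moreover have "real (n - 1) < real n"
    using n_ge_2 by simp
  ultimately show False
    by linarith
qed

lemma G_orbit_Suc_eq_max:
  assumes "1 \<le> j" "j < n"
  shows "G n (orbit n s (Suc j)) = max 0 (P' n (orbit n s j) - real j * s)"
proof (cases "j = n - 1")
  case True
  then show ?thesis
    using G_orbit_Suc[OF assms(1)] last_step_exact G_1_pos by simp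
next
  case False
  then have "orbit n s (Suc j) < 1"
    using assms by (intro orbit_less_1) auto
  then have "\<not> G n 1 \<le> P' n (orbit n s j) - real j * s"
    using orbit_Suc_eq_1_iff[OF assms(1), of s] by auto
  then show ?thesis
    using G_orbit_Suc[OF assms(1)] by simp
qed

lemma orbit_increasing:
  assumes "1 \<le> j" "j < n"
  shows "orbit n s j < orbit n s (Suc j)"
proof (rule ccontr)
  let ?x = "orbit n s"
  have G_mono: "?x (Suc i) \<le> ?x i \<longleftrightarrow> G n (?x (Suc i)) \<le> G n (?x i)" for i
    using orbit_mem
    by (intro strict_mono_on_less_eq[OF strict_mono_on_G[OF n_ge_2], symmetric]) auto
  have descent_iff: "?x (Suc i) \<le> ?x i \<longleftrightarrow> H n (?x i) \<le> real i * s"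
    if "1 \<le> i" "i < n" for i
    using G_orbit_Suc_eq_max[OF that] G_nonneg[of "?x i" n] orbit_mem[of s i]
    unfolding G_mono H_def by auto
  assume "\<not> ?x j < ?x (Suc j)"
  then have "H n (?x j) \<le> real j * s"
    using descent_iff[of j] assms by (simp add: not_less)
  have H_bound: "H n (?x k) \<le> real k * s" if "j \<le> k" "k < n" for k
    using that
  proof (induction k rule: dec_induct)
    case (step k)
    then have "H n (?x (Suc k)) \<le> H n (?x k)"
      using descent_iff[of k] assms orbit_mem[of s] by (intro mono_onD[OF mono_on_H]) auto
    also have "\<dots> \<le> real k * s"
      using step by simp
    also have "\<dots> \<le> real (Suc k) * s"
      using s_nonneg by (intro mult_right_mono) auto
    finally show ?case .
  qed (use \<open>H n (?x j) \<le> real j * s\<close> in simp)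
  then have "?x (Suc (n - 1)) \<le> ?x (n - 1)"
    using descent_iff[of "n - 1"] H_bound[of "n - 1"] assms by simp
  moreover have "?x (n - 1) < 1"
    using n_ge_2 by (intro orbit_less_1) auto
  moreover have "Suc (n - 1) = n"
    using n_ge_2 by simp
  ultimately show False
    using orbit_last by simp
qed

lemma recursion_path_orbit: "recursion_path n s (orbit n s)"
  unfolding recursion_path_def
proof (intro conjI ballI)
  fix j
  assume "j \<in> {1..<n}"
  then have "G n 0 < G n (orbit n s (Suc j))"
    using orbit_increasing[of j] orbit_mem[of s]
    by (intro strict_mono_onD[OF strict_mono_on_G[OF n_ge_2]]) (auto intro: le_less_trans)
  then show "G n (orbit n s (Suc j)) = P' n (orbit n s j) - real j * s"
    using G_orbit_Suc_eq_max[of j] \<open>j \<in> {1..<n}\<close> by auto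
qed (use orbit_mem in auto)

end

lemma last_step_exact_at_maximal_parameter:
  assumes "s < 1" "orbit n s n = 1" and maximal: "\<And>t. s < t \<Longrightarrow> t < 1 \<Longrightarrow> orbit n t n \<noteq> 1"
  shows "P' n (orbit n s (n - 1)) - real (n - 1) * s = G n 1"
proof -
  define v where "v t = P' n (orbit n t (n - 1)) - real (n - 1) * t" for t
  have "1 \<le> n - 1" "Suc (n - 1) = n"
    using n_ge_2 by simp_all
  then have reaches_1: "orbit n t n = 1 \<longleftrightarrow> G n 1 \<le> v t" for t
    using orbit_Suc_eq_1_iff[of "n - 1" t] unfolding v_def by simp
  have "\<not> G n 1 < v s"
  proof
    assume "G n 1 < v s"
    have "continuous_on UNIV v"
      unfolding v_def
      by (intro continuous_intros
          continuous_on_compose2[OF continuous_on_P' continuous_on_orbit]) auto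
    then have "(v \<longlongrightarrow> v s) (at_right s)"
      by (simp add: continuous_on_def filterlim_at_split)
    then have "\<forall>\<^sub>F t in at_right s. G n 1 < v t \<and> t < 1 \<and> s < t"
      using \<open>G n 1 < v s\<close> \<open>s < 1\<close>
      by (intro eventually_conj order_tendstoD(1) eventually_at_right_less)
        (auto intro: order_tendstoD tendsto_ident_at)
    then obtain t where "G n 1 < v t" "t < 1" "s < t"
      using eventually_happens'[OF trivial_limit_at_right_real] by blast
    then show False
      using maximal reaches_1 by fastforce
  qed
  then show ?thesis
    using reaches_1[of s] assms(2) unfolding v_def by simp
qed

end

lemma orbit_at_0_last:
  assumes "3 \<le> n"
  shows "orbit n 0 n = 1"
proof (rule ccontr)
  assume last_ne_1: "orbit n 0 n \<noteq> 1"
  have n_ge_2: "2 \<le> n"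
    using assms by simp
  have "recursion_path n 0 (orbit n 0)"
    unfolding recursion_path_def
  proof (intro conjI ballI)
    fix j
    assume j: "j \<in> {1..<n}"
    have "orbit n 0 (Suc j) \<noteq> 1"
      using orbit_stays_1[OF n_ge_2, of 0 "Suc j" n] j last_ne_1 by auto
    then have "P' n (orbit n 0 j) < G n 1"
      using orbit_Suc_eq_1_iff[OF n_ge_2, of j 0] j by auto
    moreover have "1 \<le> P' n (orbit n 0 j)"
      using strict_mono_on_leD[OF strict_mono_on_P'[OF n_ge_2], of 0 "orbit n 0 j"]
        orbit_mem[OF n_ge_2, of 0 j] P'_0[of n] n_ge_2 by auto
    ultimately show "G n (orbit n 0 (Suc j)) = P' n (orbit n 0 j) - real j * 0"
      using G_orbit_Suc[OF n_ge_2, of j 0] j by simp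
  qed (use orbit_mem[OF n_ge_2] in auto)
  then show False
    using no_recursion_path_at_zero[OF assms] by blast
qed

lemma exists_increasing_recursion_path:
  assumes "3 \<le> n"
  obtains s where "0 < s" "s < 1" "recursion_path n s (orbit n s)" "orbit n s n = 1"
    "\<And>j. j \<in> {1..<n} \<Longrightarrow> orbit n s j < orbit n s (Suc j)"
proof -
  have n_ge_2: "2 \<le> n"
    using assms by simp
  define S where "S = {s \<in> {0..1}. orbit n s n = 1}"
  have "closed S"
    unfolding S_def
    by (intro continuous_closed_preimage_constant
        continuous_on_subset[OF continuous_on_orbit[OF n_ge_2]]) auto
  moreover have "0 \<in> S"
    unfolding S_def using orbit_at_0_last[OF assms] by simp
  moreover have "bdd_above S"
    unfolding S_def by (rule bdd_aboveI[of _ 1]) auto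
  ultimately have "Sup S \<in> S"
    by (intro closed_contains_Sup) auto
  define s where "s = Sup S"
  have s_mem: "0 \<le> s" "s \<le> 1" and last: "orbit n s n = 1"
    using \<open>Sup S \<in> S\<close> unfolding s_def S_def by auto
  have "s \<noteq> 1"
    using last orbit_at_1[OF n_ge_2] by auto
  with s_mem have "s < 1"
    by simp
  have "orbit n t n \<noteq> 1" if "s < t" "t < 1" for t
    using that s_mem cSup_upper[OF _ \<open>bdd_above S\<close>, of t] unfolding s_def S_def by force
  then have exact: "P' n (orbit n s (n - 1)) - real (n - 1) * s = G n 1"
    by (rule last_step_exact_at_maximal_parameter[OF n_ge_2 \<open>s < 1\<close> last])
  note path = recursion_path_orbit[OF n_ge_2 s_mem exact]
  have "s \<noteq> 0"
    using path no_recursion_path_at_zero[OF assms] by auto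
  with s_mem have "0 < s"
    by simp
  show ?thesis
    using that \<open>0 < s\<close> \<open>s < 1\<close> path last orbit_increasing[OF n_ge_2 s_mem exact] by auto
qed

definition solution :: "nat \<Rightarrow> real \<Rightarrow> (nat \<Rightarrow> real) \<Rightarrow> bool" where
  "solution n \<zeta> \<epsilon> \<longleftrightarrow> \<epsilon> 1 = 1 \<and> \<epsilon> n = 0 \<and> (\<forall>j\<in>{1..<n}. \<epsilon> (j + 1) < \<epsilon> j) \<and>
    (\<forall>j\<in>{1..n-1}. P' n (1 - \<epsilon> (j + 1)) - P' n (1 - \<epsilon> j) =
       \<epsilon> (j + 1) * P' n (1 - \<epsilon> (j + 1)) + P n (1 - \<epsilon> (j + 1)) - real j / \<zeta>)"

lemma system_equation_iff:
  "P' n (1 - e') - P' n (1 - e) = e' * P' n (1 - e') + P n (1 - e') - c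
    \<longleftrightarrow> G n (1 - e') = P' n (1 - e) - c"
  unfolding G_def by (auto simp: algebra_simps)

lemma recursion_path_of_solution:
  assumes "solution n \<zeta> \<epsilon>"
  shows "recursion_path n (1 / \<zeta>) (\<lambda>j. 1 - \<epsilon> j)"
proof -
  have decreasing: "\<epsilon> k \<le> \<epsilon> j" if "1 \<le> j" "j \<le> k" "k \<le> n" for j k
    using that(2,3)
  proof (induction k rule: dec_induct)
    case (step k)
    then have "\<epsilon> (k + 1) < \<epsilon> k"
      using assms that(1) unfolding solution_def by auto
    with step show ?case
      by simp
  qed simp
  have "0 \<le> \<epsilon> j \<and> \<epsilon> j \<le> 1" if "j \<in> {1..n}" for j
    using decreasing[of 1 j] decreasing[of j n] that assms unfolding solution_def by auto
  then show ?thesis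
    using assms unfolding recursion_path_def solution_def system_equation_iff by auto
qed

lemma solution_of_recursion_path:
  assumes "recursion_path n s x" "x n = 1" "\<And>j. j \<in> {1..<n} \<Longrightarrow> x j < x (Suc j)"
  shows "solution n (1 / s) (\<lambda>j. 1 - x j)"
  using assms unfolding recursion_path_def solution_def system_equation_iff by auto

theorem mainTheorem7:
  fixes n :: nat
  assumes "n > 2"
  shows "\<exists>!\<zeta>::real. \<zeta> > 1 \<and>
    (\<exists>\<epsilon> :: nat \<Rightarrow> real.
       \<epsilon> 1 = 1 \<and> \<epsilon> n = 0 \<and>
       (\<forall>j\<in>{1..<n}. \<epsilon> (j + 1) < \<epsilon> j) \<and>
       (\<forall>j\<in>{1..n-1}.
          P' n (1 - \<epsilon> (j + 1)) - P' n (1 - \<epsilon> j) =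
          \<epsilon> (j + 1) * P' n (1 - \<epsilon> (j + 1)) + P n (1 - \<epsilon> (j + 1)) - real j / \<zeta>))"
proof -
  have "3 \<le> n"
    using assms by simp
  then obtain s where s: "0 < s" "s < 1" "recursion_path n s (orbit n s)" "orbit n s n = 1"
    "\<And>j. j \<in> {1..<n} \<Longrightarrow> orbit n s j < orbit n s (Suc j)"
    using exists_increasing_recursion_path by blast
  have "1 < 1 / s"
    using s by simp
  moreover have "solution n (1 / s) (\<lambda>j. 1 - orbit n s j)"
    by (rule solution_of_recursion_path[OF s(3-5)])
  moreover have "\<zeta> = \<zeta>'" if "solution n \<zeta> \<epsilon>" "solution n \<zeta>' \<epsilon>'" for \<zeta> \<zeta>' \<epsilon> \<epsilon>'
  proof -
    have "1 / \<zeta> = 1 / \<zeta>'"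
      using recursion_path_unique_parameter[OF _ recursion_path_of_solution[OF that(1)] _
          recursion_path_of_solution[OF that(2)]] that assms
      unfolding solution_def by simp
    then show ?thesis
      by simp
  qed
  ultimately have "\<exists>!\<zeta>. 1 < \<zeta> \<and> (\<exists>\<epsilon>. solution n \<zeta> \<epsilon>)"
    by (intro ex1I[of _ "1 / s"]) blast+
  then show ?thesis
    by (simp only: solution_def)
qed

end
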